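(* In the adaptive viral marketing setting under the Independent Cascade model, the utility function $f(S,\phi)=|\{v\in E:\exists u\in S,\ \exists w\in E,\ \phi_u((w,v))=1\}|+|S|$ is worst-case monotone and worst-case submodular with respect to the induced prior $p(\phi)$, and it satisfies minimal dependency.
   Context: Adaptive viral marketing setting: $G=(E,Z)$ is a finite directed graph with node set $E$ (the items) and edge set $Z$, and each edge $(u,v)\in Z$ has a propagation probability $p(u,v)\in[0,1]$. Let $X:Z\to\{0,1\}$ be random with independent coordinates, $\Pr[X(u,v)=1]=p(u,v)$ (edge live if $1$, blocked if $0$). The state of a node $u$ is the function $\phi_u:Z\to\{0,1,?\}$ with $\phi_u((w,v))=X(w,v)$ if $w$ is reachable from $u$ by a directed path of live edges (including $w=u$), and $\phi_u((w,v))=?$ otherwise. The realization is $\phi$ with $\phi(u)=\phi_u$; its prior $p$ is the law induced by $X$, $\Phi\sim p$, $U^+=\{\phi:p(\phi)>0\}$. A partial realization is $\psi:S\to O$ with $\mathrm{dom}(\psi)=S\subseteq E$ ($O$ the set of possible states), identified with its set of pairs; $\psi\subseteq\psi'$ means $\psi'$ extends $\psi$; $\phi\sim\psi$ means agreement on $\mathrm{dom}(\psi)$; only $\psi$ with $\Pr[\Phi\sim\psi]>0$ are considered and $p(\phi\mid\psi)=\Pr[\Phi=\phi\mid\Phi\sim\psi]$. $f(S,\psi)=\mathbb{E}[f(S,\Phi)\mid\Phi\sim\psi]$. For $e\notin\mathrm{dom}(\psi)$, $O(e,\psi)=\{o:\exists\phi,\ p(\phi\mid\psi)>0,\ \phi(e)=o\}$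 and $f_{wc}(e\mid\psi)=\min_{o\in O(e,\psi)}\{f(\mathrm{dom}(\psi)\cup\{e\},\psi\cup\{(e,o)\})-f(\mathrm{dom}(\psi),\psi)\}$. $f$ is worst-case submodular if $f_{wc}(e\mid\psi)\ge f_{wc}(e\mid\psi')$ for all $\psi\subseteq\psi'$ and $e\notin\mathrm{dom}(\psi')$; worst-case monotone if $f_{wc}(e\mid\psi)\ge0$ for all $\psi$ and $e\notin\mathrm{dom}(\psi)$; $f$ satisfies minimal dependency if $f(\mathrm{dom}(\psi),\psi)=f(\mathrm{dom}(\psi),\phi)$ for all $\psi$ and all $\phi\in U^+$ with $\phi\sim\psi$. *)

theory Defs
  imports Complex_Main
begin

text \<open>Nodes have type 'a; the graph is (E, Z) with Z \<subseteq> E \<times> E; p gives propagation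
  probabilities. A live-edge outcome X : Z \<rightarrow> {0,1} is represented by the set of
  live edges (a subset of Z). The state value ? is None, 0/1 are Some False / Some True.\<close>

type_synonym 'a state = "('a \<times> 'a) \<Rightarrow> bool option"
type_synonym 'a realization = "'a \<Rightarrow> 'a state"
type_synonym 'a partial_realization = "'a \<rightharpoonup> 'a state"

definition live_prob :: "('a \<times> 'a) set \<Rightarrow> ('a \<times> 'a \<Rightarrow> real) \<Rightarrow> ('a \<times> 'a) set \<Rightarrow> real" where
  "live_prob Z p X = (\<Prod>z\<in>Z. if z \<in> X then p z else 1 - p z)"

definition realization_of :: "('a \<times> 'a) set \<Rightarrow> ('a \<times> 'a) set \<Rightarrow> 'a realization" where
  "realization_of Z X = (\<lambda>u (w, v). if (w, v) \<in> Z \<and> (u, w) \<in> X\<^sup>* then Some ((w, v) \<in> X) else None)"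

definition prior :: "('a \<times> 'a) set \<Rightarrow> ('a \<times> 'a \<Rightarrow> real) \<Rightarrow> 'a realization \<Rightarrow> real" where
  "prior Z p \<phi> = (\<Sum>X\<in>Pow Z. if realization_of Z X = \<phi> then live_prob Z p X else 0)"

definition support_realizations :: "('a \<times> 'a) set \<Rightarrow> ('a \<times> 'a \<Rightarrow> real) \<Rightarrow> 'a realization set" where
  "support_realizations Z p = {\<phi>. prior Z p \<phi> > 0}"

definition consistent :: "'a realization \<Rightarrow> 'a partial_realization \<Rightarrow> bool" where
  "consistent \<phi> \<psi> \<longleftrightarrow> \<psi> \<subseteq>\<^sub>m (Some \<circ> \<phi>)"

definition prob_consistent :: "('a \<times> 'a) set \<Rightarrow> ('a \<times> 'a \<Rightarrow> real) \<Rightarrow> 'a partial_realization \<Rightarrow> real" where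
  "prob_consistent Z p \<psi> =
     (\<Sum>X\<in>Pow Z. if consistent (realization_of Z X) \<psi> then live_prob Z p X else 0)"

definition cond_prior :: "('a \<times> 'a) set \<Rightarrow> ('a \<times> 'a \<Rightarrow> real) \<Rightarrow> 'a realization \<Rightarrow> 'a partial_realization \<Rightarrow> real" where
  "cond_prior Z p \<phi> \<psi> =
     (if consistent \<phi> \<psi> then prior Z p \<phi> / prob_consistent Z p \<psi> else 0)"

definition admissible :: "'a set \<Rightarrow> ('a \<times> 'a) set \<Rightarrow> ('a \<times> 'a \<Rightarrow> real) \<Rightarrow> 'a partial_realization \<Rightarrow> bool" where
  "admissible E Z p \<psi> \<longleftrightarrow> dom \<psi> \<subseteq> E \<and> prob_consistent Z p \<psi> > 0"

definition cond_util :: "('a \<times> 'a) set \<Rightarrow> ('a \<times> 'a \<Rightarrow> real) \<Rightarrow> ('a set \<Rightarrow> 'a realization \<Rightarrow> real)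
    \<Rightarrow> 'a set \<Rightarrow> 'a partial_realization \<Rightarrow> real" where
  "cond_util Z p f S \<psi> =
     (\<Sum>X\<in>Pow Z. if consistent (realization_of Z X) \<psi>
                  then live_prob Z p X * f S (realization_of Z X) else 0) / prob_consistent Z p \<psi>"

definition possible_states :: "('a \<times> 'a) set \<Rightarrow> ('a \<times> 'a \<Rightarrow> real) \<Rightarrow> 'a \<Rightarrow> 'a partial_realization \<Rightarrow> 'a state set" where
  "possible_states Z p e \<psi> = {\<phi> e | \<phi>. cond_prior Z p \<phi> \<psi> > 0}"

definition wc_gain :: "('a \<times> 'a) set \<Rightarrow> ('a \<times> 'a \<Rightarrow> real) \<Rightarrow> ('a set \<Rightarrow> 'a realization \<Rightarrow> real)
    \<Rightarrow> 'a \<Rightarrow> 'a partial_realization \<Rightarrow> real" where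
  "wc_gain Z p f e \<psi> =
     Min ((\<lambda>st. cond_util Z p f (dom \<psi> \<union> {e}) (\<psi>(e \<mapsto> st)) - cond_util Z p f (dom \<psi>) \<psi>)
          ` possible_states Z p e \<psi>)"

definition wc_monotone :: "'a set \<Rightarrow> ('a \<times> 'a) set \<Rightarrow> ('a \<times> 'a \<Rightarrow> real)
    \<Rightarrow> ('a set \<Rightarrow> 'a realization \<Rightarrow> real) \<Rightarrow> bool" where
  "wc_monotone E Z p f \<longleftrightarrow>
     (\<forall>\<psi> e. admissible E Z p \<psi> \<and> e \<in> E \<and> e \<notin> dom \<psi> \<longrightarrow> wc_gain Z p f e \<psi> \<ge> 0)"

definition wc_submodular :: "'a set \<Rightarrow> ('a \<times> 'a) set \<Rightarrow> ('a \<times> 'a \<Rightarrow> real)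
    \<Rightarrow> ('a set \<Rightarrow> 'a realization \<Rightarrow> real) \<Rightarrow> bool" where
  "wc_submodular E Z p f \<longleftrightarrow>
     (\<forall>\<psi> \<psi>' e. admissible E Z p \<psi> \<and> admissible E Z p \<psi>' \<and> \<psi> \<subseteq>\<^sub>m \<psi>' \<and>
        e \<in> E \<and> e \<notin> dom \<psi>' \<longrightarrow> wc_gain Z p f e \<psi> \<ge> wc_gain Z p f e \<psi>')"

definition minimal_dependency :: "'a set \<Rightarrow> ('a \<times> 'a) set \<Rightarrow> ('a \<times> 'a \<Rightarrow> real)
    \<Rightarrow> ('a set \<Rightarrow> 'a realization \<Rightarrow> real) \<Rightarrow> bool" where
  "minimal_dependency E Z p f \<longleftrightarrow>
     (\<forall>\<psi> \<phi>. admissible E Z p \<psi> \<and> \<phi> \<in> support_realizations Z p \<and> consistent \<phi> \<psi> \<longrightarrow>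
        cond_util Z p f (dom \<psi>) \<psi> = f (dom \<psi>) \<phi>)"

definition ic_util :: "'a set \<Rightarrow> 'a set \<Rightarrow> 'a realization \<Rightarrow> real" where
  "ic_util E S \<phi> = real (card {v \<in> E. \<exists>u\<in>S. \<exists>w\<in>E. \<phi> u (w, v) = Some True}) + real (card S)"

end

theory Submission
  imports Defs
begin

text \<open>The states of the seeds in \<psi> already show which nodes they reach, so
  f(dom \<psi>, \<psi>) = |covered(\<psi>)| + |dom \<psi>| for every realization consistent with \<psi>; this is
  minimal dependency. Adding e in state s therefore gains 1 + |reached(s) - covered(\<psi>)| > 0.
  For submodularity, let \<psi> \<subseteq> \<psi>' and let s arise from an outcome X consistent with \<psi>. Taking
  the live edges of an outcome consistent with \<psi>' on the nodes reachable from dom \<psi>', and those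
  of X elsewhere, gives an outcome consistent with \<psi>' in which e reaches, beyond covered(\<psi>'),
  only nodes reached in s; hence the worst-case gain under \<psi>' is at most that under \<psi>.\<close>

lemma sum_if_pos_obtain:
  assumes "0 < (\<Sum>x\<in>A. if P x then (g x :: real) else 0)"
  obtains x where "x \<in> A" "P x" "0 < g x"
proof -
  have "\<not> (\<forall>x\<in>A. (if P x then g x else 0) \<le> 0)"
    using assms by (meson sum_nonpos not_le)
  then show ?thesis using that by (auto split: if_splits)
qed

lemma member_le_sum_if:
  assumes "finite A" "x \<in> A" "P x" "\<forall>y\<in>A. 0 \<le> (g y :: real)"
  shows "g x \<le> (\<Sum>y\<in>A. if P y then g y else 0)"
  using member_le_sum[of x A "\<lambda>y. if P y then g y else 0"] assms by auto

definition graft :: "'a set \<Rightarrow> ('a \<times> 'a) set \<Rightarrow> ('a \<times> 'a) set \<Rightarrow> ('a \<times> 'a) set" where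
  "graft K Y X = {z \<in> Y. fst z \<in> K} \<union> {z \<in> X. fst z \<notin> K}"

lemma rtrancl_stays_in_closed:
  assumes "Y `` K \<subseteq> K" "u \<in> K" "(u, w) \<in> Y\<^sup>*"
  shows "w \<in> K"
  using Image_closed_trancl[OF assms(1)] assms(2,3) by blast

lemma rtrancl_graft_iff:
  assumes closed: "Y `` K \<subseteq> K" and "u \<in> K"
  shows "(u, w) \<in> (graft K Y X)\<^sup>* \<longleftrightarrow> (u, w) \<in> Y\<^sup>*"
proof
  assume "(u, w) \<in> (graft K Y X)\<^sup>*"
  then show "(u, w) \<in> Y\<^sup>*"
  proof (induction rule: rtrancl_induct)
    case (step y z)
    then have "y \<in> K" using rtrancl_stays_in_closed[OF closed \<open>u \<in> K\<close>] by blast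
    with step show ?case by (auto simp: graft_def intro: rtrancl_into_rtrancl)
  qed simp
next
  assume "(u, w) \<in> Y\<^sup>*"
  then show "(u, w) \<in> (graft K Y X)\<^sup>*"
  proof (induction rule: rtrancl_induct)
    case (step y z)
    then have "y \<in> K" using rtrancl_stays_in_closed[OF closed \<open>u \<in> K\<close>] by blast
    with step show ?case by (auto simp: graft_def intro: rtrancl_into_rtrancl)
  qed simp
qed

lemma rtrancl_graft_outside:
  assumes "Y `` K \<subseteq> K" "(e, w) \<in> (graft K Y X)\<^sup>*"
  shows "(e, w) \<in> X\<^sup>* \<or> w \<in> K"
  using assms(2)
proof (induction rule: rtrancl_induct)
  case (step y z)
  then show ?case using assms(1) by (auto simp: graft_def intro: rtrancl_into_rtrancl)
qed simp

lemma realization_of_graft: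
  assumes "Y `` K \<subseteq> K" "u \<in> K"
  shows "realization_of Z (graft K Y X) u = realization_of Z Y u"
proof -
  have "(w, v) \<in> graft K Y X \<longleftrightarrow> (w, v) \<in> Y" if "(u, w) \<in> Y\<^sup>*" for w v
    using rtrancl_stays_in_closed[OF assms that] by (auto simp: graft_def)
  then show ?thesis
    using rtrancl_graft_iff[OF assms] by (auto simp: realization_of_def fun_eq_iff)
qed

definition reached :: "'a set \<Rightarrow> 'a state \<Rightarrow> 'a set" where
  "reached E s = {v \<in> E. \<exists>w\<in>E. s (w, v) = Some True}"

definition covered :: "'a set \<Rightarrow> 'a partial_realization \<Rightarrow> 'a set" where
  "covered E \<psi> = (\<Union>s\<in>ran \<psi>. reached E s)"

lemma finite_reached: "finite E \<Longrightarrow> finite (reached E s)"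
  by (simp add: reached_def)

lemma finite_covered: "finite E \<Longrightarrow> finite (covered E \<psi>)"
  by (rule finite_subset[of _ E]) (auto simp: covered_def reached_def)

lemma ran_mono_map_le: "\<psi> \<subseteq>\<^sub>m \<psi>' \<Longrightarrow> ran \<psi> \<subseteq> ran \<psi>'"
  by (auto simp: map_le_def ran_def dom_def) metis

lemma covered_mono: "\<psi> \<subseteq>\<^sub>m \<psi>' \<Longrightarrow> covered E \<psi> \<subseteq> covered E \<psi>'"
  unfolding covered_def using ran_mono_map_le by blast

lemma covered_upd: "e \<notin> dom \<psi> \<Longrightarrow> covered E (\<psi>(e \<mapsto> s)) = covered E \<psi> \<union> reached E s"
  by (auto simp: covered_def domIff)

lemma ran_consistent:
  assumes "consistent \<phi> \<psi>"
  shows "ran \<psi> = \<phi> ` dom \<psi>"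
proof -
  have "\<psi> u = Some (\<phi> u)" if "u \<in> dom \<psi>" for u
    using assms that by (auto simp: consistent_def map_le_def)
  then show ?thesis by (auto simp: ran_def) (metis domI image_eqI option.inject)
qed

lemma ic_util_consistent:
  assumes "consistent \<phi> \<psi>"
  shows "ic_util E (dom \<psi>) \<phi> = real (card (covered E \<psi>)) + real (card (dom \<psi>))"
proof -
  have "{v \<in> E. \<exists>u\<in>dom \<psi>. \<exists>w\<in>E. \<phi> u (w, v) = Some True} = covered E \<psi>"
    unfolding covered_def ran_consistent[OF assms] reached_def by blast
  then show ?thesis by (simp add: ic_util_def)
qed

definition consistent_outcomes ::
    "('a \<times> 'a) set \<Rightarrow> ('a \<times> 'a \<Rightarrow> real) \<Rightarrow> 'a partial_realization \<Rightarrow> ('a \<times> 'a) set set" where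
  "consistent_outcomes Z p \<psi> =
     {X \<in> Pow Z. 0 < live_prob Z p X \<and> consistent (realization_of Z X) \<psi>}"

lemma cond_util_eq_const:
  assumes "prob_consistent Z p \<psi> \<noteq> 0"
    and "\<And>X. X \<in> Pow Z \<Longrightarrow> consistent (realization_of Z X) \<psi> \<Longrightarrow> f S (realization_of Z X) = c"
  shows "cond_util Z p f S \<psi> = c"
proof -
  have "(\<Sum>X\<in>Pow Z. if consistent (realization_of Z X) \<psi>
                      then live_prob Z p X * f S (realization_of Z X) else 0)
     = (\<Sum>X\<in>Pow Z. (if consistent (realization_of Z X) \<psi> then live_prob Z p X else 0) * c)"
    by (rule sum.cong) (auto simp: assms(2))
  also have "\<dots> = prob_consistent Z p \<psi> * c"
    by (simp add: prob_consistent_def sum_distrib_right)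
  finally show ?thesis using assms(1) by (simp add: cond_util_def)
qed

lemma cond_util_ic_util:
  assumes "prob_consistent Z p \<psi> \<noteq> 0"
  shows "cond_util Z p (ic_util E) (dom \<psi>) \<psi> = real (card (covered E \<psi>)) + real (card (dom \<psi>))"
  using assms by (rule cond_util_eq_const) (simp add: ic_util_consistent)

locale ic_prior =
  fixes Z :: "('a \<times> 'a) set" and p :: "'a \<times> 'a \<Rightarrow> real"
  assumes finite_edges: "finite Z"
    and prob_range: "\<forall>z\<in>Z. 0 \<le> p z \<and> p z \<le> 1"
begin

lemma live_prob_nonneg: "0 \<le> live_prob Z p X"
  unfolding live_prob_def using prob_range by (intro prod_nonneg) auto

lemma live_prob_pos_iff: "0 < live_prob Z p X \<longleftrightarrow> (\<forall>z\<in>Z. (if z \<in> X then p z else 1 - p z) \<noteq> 0)"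
  using live_prob_nonneg[of X] prod_zero_iff[OF finite_edges, of "\<lambda>z. if z \<in> X then p z else 1 - p z"]
  by (auto simp: live_prob_def order_less_le)

lemma live_prob_graft_pos:
  assumes "0 < live_prob Z p X" "0 < live_prob Z p Y"
  shows "0 < live_prob Z p (graft K Y X)"
  using assms unfolding live_prob_pos_iff graft_def by auto

lemma prob_consistent_pos_iff: "0 < prob_consistent Z p \<psi> \<longleftrightarrow> consistent_outcomes Z p \<psi> \<noteq> {}"
proof
  assume "0 < prob_consistent Z p \<psi>"
  then show "consistent_outcomes Z p \<psi> \<noteq> {}"
    unfolding prob_consistent_def consistent_outcomes_def by (elim sum_if_pos_obtain) blast
next
  assume "consistent_outcomes Z p \<psi> \<noteq> {}"
  then obtain X where X: "X \<in> Pow Z" "0 < live_prob Z p X" "consistent (realization_of Z X) \<psi>"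
    unfolding consistent_outcomes_def by blast
  have "live_prob Z p X \<le> prob_consistent Z p \<psi>"
    unfolding prob_consistent_def using finite_edges X live_prob_nonneg by (intro member_le_sum_if) auto
  with X(2) show "0 < prob_consistent Z p \<psi>" by linarith
qed

lemma possible_states_eq:
  "possible_states Z p e \<psi> = (\<lambda>X. realization_of Z X e) ` consistent_outcomes Z p \<psi>"
proof (intro equalityI subsetI)
  fix s assume "s \<in> possible_states Z p e \<psi>"
  then obtain \<phi> where s: "s = \<phi> e" and pos: "0 < cond_prior Z p \<phi> \<psi>"
    unfolding possible_states_def by blast
  then have cons: "consistent \<phi> \<psi>" and "0 < prior Z p \<phi> / prob_consistent Z p \<psi>"
    unfolding cond_prior_def by (auto split: if_splits)
  moreover have "0 \<le> prob_consistent Z p \<psi>"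
    unfolding prob_consistent_def using live_prob_nonneg by (intro sum_nonneg) auto
  ultimately have "0 < prior Z p \<phi>" by (simp add: zero_less_divide_iff)
  then obtain X where "X \<in> Pow Z" "realization_of Z X = \<phi>" "0 < live_prob Z p X"
    unfolding prior_def by (elim sum_if_pos_obtain)
  with s cons show "s \<in> (\<lambda>X. realization_of Z X e) ` consistent_outcomes Z p \<psi>"
    unfolding consistent_outcomes_def by blast
next
  fix s assume "s \<in> (\<lambda>X. realization_of Z X e) ` consistent_outcomes Z p \<psi>"
  then obtain X where s: "s = realization_of Z X e" and X: "X \<in> consistent_outcomes Z p \<psi>"
    by blast
  then have "live_prob Z p X \<le> prior Z p (realization_of Z X)"
    unfolding prior_def consistent_outcomes_def using finite_edges live_prob_nonneg
    by (intro member_le_sum_if) auto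
  moreover have "0 < prob_consistent Z p \<psi>" using X prob_consistent_pos_iff by blast
  ultimately have "0 < cond_prior Z p (realization_of Z X) \<psi>"
    using X unfolding cond_prior_def consistent_outcomes_def by auto
  with s show "s \<in> possible_states Z p e \<psi>" unfolding possible_states_def by blast
qed

lemma finite_possible_states: "finite (possible_states Z p e \<psi>)"
  unfolding possible_states_eq consistent_outcomes_def using finite_edges by simp

lemma possible_states_nonempty:
  "0 < prob_consistent Z p \<psi> \<Longrightarrow> possible_states Z p e \<psi> \<noteq> {}"
  unfolding possible_states_eq prob_consistent_pos_iff by simp

lemma ic_util_gain:
  assumes "finite E" "dom \<psi> \<subseteq> E" "e \<notin> dom \<psi>" "s \<in> possible_states Z p e \<psi>"
  shows "cond_util Z p (ic_util E) (dom \<psi> \<union> {e}) (\<psi>(e \<mapsto> s)) - cond_util Z p (ic_util E) (dom \<psi>) \<psi>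
           = real (card (reached E s - covered E \<psi>)) + 1"
proof -
  obtain X where X: "X \<in> consistent_outcomes Z p \<psi>" and s: "s = realization_of Z X e"
    using assms(4) unfolding possible_states_eq by blast
  then have "X \<in> consistent_outcomes Z p (\<psi>(e \<mapsto> s))"
    unfolding consistent_outcomes_def consistent_def map_le_def by auto
  then have "0 < prob_consistent Z p \<psi>" "0 < prob_consistent Z p (\<psi>(e \<mapsto> s))"
    using X by (auto simp: prob_consistent_pos_iff)
  then have pos: "prob_consistent Z p \<psi> \<noteq> 0" "prob_consistent Z p (\<psi>(e \<mapsto> s)) \<noteq> 0"
    by simp_all
  have "card (covered E \<psi> \<union> reached E s) = card (covered E \<psi>) + card (reached E s - covered E \<psi>)"
    using card_Un_disjoint[of "covered E \<psi>" "reached E s - covered E \<psi>"]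
    by (simp add: assms(1) finite_covered finite_reached)
  moreover have "card (insert e (dom \<psi>)) = card (dom \<psi>) + 1"
    using finite_subset[OF assms(2,1)] assms(3) by simp
  moreover have "cond_util Z p (ic_util E) (dom \<psi> \<union> {e}) (\<psi>(e \<mapsto> s))
      = real (card (covered E \<psi> \<union> reached E s)) + real (card (insert e (dom \<psi>)))"
    using cond_util_ic_util[OF pos(2), of E] covered_upd[OF assms(3), of E s] by simp
  ultimately show ?thesis
    using cond_util_ic_util[OF pos(1), of E] by simp
qed

lemma wc_gain_ic_util:
  assumes "finite E" "dom \<psi> \<subseteq> E" "e \<notin> dom \<psi>"
  shows "wc_gain Z p (ic_util E) e \<psi>
           = Min ((\<lambda>s. real (card (reached E s - covered E \<psi>)) + 1) ` possible_states Z p e \<psi>)"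
  unfolding wc_gain_def using ic_util_gain[OF assms] by (intro arg_cong[where f = Min] image_cong) auto

lemma exchange_consistent_outcome:
  assumes X: "X \<in> Pow Z" "0 < live_prob Z p X" and Y: "Y \<in> consistent_outcomes Z p \<psi>'"
  obtains X' where "X' \<in> consistent_outcomes Z p \<psi>'"
    "reached E (realization_of Z X' e) - covered E \<psi>' \<subseteq> reached E (realization_of Z X e)"
proof
  define K where "K = Y\<^sup>* `` dom \<psi>'"
  have closed: "Y `` K \<subseteq> K" unfolding K_def by (auto intro: rtrancl_into_rtrancl)
  have \<psi>'_eq: "\<psi>' u = Some (realization_of Z Y u)" if "u \<in> dom \<psi>'" for u
    using Y that unfolding consistent_outcomes_def consistent_def map_le_def by auto
  have "realization_of Z (graft K Y X) u = realization_of Z Y u" if "u \<in> dom \<psi>'" for u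
    using realization_of_graft[OF closed] that unfolding K_def by blast
  then show "graft K Y X \<in> consistent_outcomes Z p \<psi>'"
    using X Y live_prob_graft_pos \<psi>'_eq
    unfolding consistent_outcomes_def consistent_def map_le_def graft_def by auto
  show "reached E (realization_of Z (graft K Y X) e) - covered E \<psi>' \<subseteq> reached E (realization_of Z X e)"
  proof
    fix v assume v: "v \<in> reached E (realization_of Z (graft K Y X) e) - covered E \<psi>'"
    then obtain w where w: "v \<in> E" "w \<in> E" "(w, v) \<in> Z" "(e, w) \<in> (graft K Y X)\<^sup>*" "(w, v) \<in> graft K Y X"
      by (auto simp: reached_def realization_of_def split: if_splits)
    have "w \<notin> K"
    proof
      assume "w \<in> K"
      then obtain u where u: "u \<in> dom \<psi>'" "(u, w) \<in> Y\<^sup>*" unfolding K_def by blast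
      have "(w, v) \<in> Y" using w(5) \<open>w \<in> K\<close> by (simp add: graft_def)
      then have "v \<in> reached E (realization_of Z Y u)"
        using u(2) w(1-3) by (auto simp: reached_def realization_of_def)
      then have "v \<in> covered E \<psi>'"
        using \<psi>'_eq[OF u(1)] unfolding covered_def by (auto intro: ranI)
      with v show False by blast
    qed
    then have "(e, w) \<in> X\<^sup>*" "(w, v) \<in> X"
      using rtrancl_graft_outside[OF closed w(4)] w(5) by (auto simp: graft_def)
    then show "v \<in> reached E (realization_of Z X e)"
      using w(1-3) by (auto simp: reached_def realization_of_def)
  qed
qed

lemma wc_monotone_ic_util:
  assumes "finite E"
  shows "wc_monotone E Z p (ic_util E)"
  unfolding wc_monotone_def admissible_def
proof (intro allI impI)
  fix \<psi> e assume "(dom \<psi> \<subseteq> E \<and> 0 < prob_consistent Z p \<psi>) \<and> e \<in> E \<and> e \<notin> dom \<psi>"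
  then show "0 \<le> wc_gain Z p (ic_util E) e \<psi>"
    using finite_possible_states possible_states_nonempty
    by (simp add: wc_gain_ic_util[OF assms])
qed

lemma wc_gain_ic_util_antimono:
  assumes "finite E" "admissible E Z p \<psi>" "admissible E Z p \<psi>'" "\<psi> \<subseteq>\<^sub>m \<psi>'" "e \<notin> dom \<psi>'"
  shows "wc_gain Z p (ic_util E) e \<psi>' \<le> wc_gain Z p (ic_util E) e \<psi>"
proof -
  define g where "g \<psi> s = real (card (reached E s - covered E \<psi>)) + 1" for \<psi> s
  have e: "e \<notin> dom \<psi>" using assms(4,5) map_le_implies_dom_le by blast
  have adm: "dom \<psi> \<subseteq> E" "0 < prob_consistent Z p \<psi>" "dom \<psi>' \<subseteq> E" "0 < prob_consistent Z p \<psi>'"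
    using assms(2,3) by (auto simp: admissible_def)
  obtain Y where Y: "Y \<in> consistent_outcomes Z p \<psi>'"
    using adm(4) prob_consistent_pos_iff by blast
  have "Min (g \<psi>' ` possible_states Z p e \<psi>') \<le> g \<psi> s" if ps: "s \<in> possible_states Z p e \<psi>" for s
  proof -
    obtain X where X: "X \<in> consistent_outcomes Z p \<psi>" and s: "s = realization_of Z X e"
      using ps unfolding possible_states_eq by blast
    then have "X \<in> Pow Z" "0 < live_prob Z p X" by (auto simp: consistent_outcomes_def)
    from exchange_consistent_outcome[OF this Y, of E e] obtain X'
      where X': "X' \<in> consistent_outcomes Z p \<psi>'"
        and reach: "reached E (realization_of Z X' e) - covered E \<psi>' \<subseteq> reached E s"
      unfolding s by blast
    have "reached E (realization_of Z X' e) - covered E \<psi>' \<subseteq> reached E s - covered E \<psi>"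
      using reach covered_mono[OF assms(4)] by blast
    then have "g \<psi>' (realization_of Z X' e) \<le> g \<psi> s"
      unfolding g_def by (simp add: card_mono assms(1) finite_reached)
    moreover have "realization_of Z X' e \<in> possible_states Z p e \<psi>'"
      using X' unfolding possible_states_eq by blast
    ultimately show ?thesis
      using finite_possible_states by (meson Min_le finite_imageI image_eqI order_trans)
  qed
  then show ?thesis
    using finite_possible_states possible_states_nonempty[OF adm(2)]
    unfolding g_def wc_gain_ic_util[OF assms(1) adm(1) e] wc_gain_ic_util[OF assms(1) adm(3) assms(5)]
    by (simp add: Min_ge_iff)
qed

lemma wc_submodular_ic_util: "finite E \<Longrightarrow> wc_submodular E Z p (ic_util E)"
  unfolding wc_submodular_def using wc_gain_ic_util_antimono by blast

end

lemma minimal_dependency_ic_util: "minimal_dependency E Z p (ic_util E)"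
  unfolding minimal_dependency_def admissible_def
  by (auto simp: cond_util_ic_util ic_util_consistent)

theorem proposition3:
  fixes E :: "'a set" and Z :: "('a \<times> 'a) set" and p :: "'a \<times> 'a \<Rightarrow> real"
  assumes "finite E"
    and "Z \<subseteq> E \<times> E"
    and "\<forall>z\<in>Z. 0 \<le> p z \<and> p z \<le> 1"
  shows "wc_monotone E Z p (ic_util E) \<and> wc_submodular E Z p (ic_util E)
         \<and> minimal_dependency E Z p (ic_util E)"
proof -
  interpret ic_prior Z p
    using assms(3) finite_subset[OF assms(2)] assms(1) by unfold_locales simp_all
  show ?thesis
    using assms(1) by (intro conjI wc_monotone_ic_util wc_submodular_ic_util minimal_dependency_ic_util)
qed

end
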